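(* Let $\mathcal P$ be a CPOS $2n$-gon. Let $A^+$ be the area of the polygon $P_1P_2\cdots P_{n+1}$ and $A^-$ the area of the polygon $P_{n+1}P_{n+2}\cdots P_{2n}P_1$ (the two parts into which the great diagonal $P_1P_{n+1}$ divides $\mathcal P$). Then $$A^- - A^+ = 2\sum_{j=1}^n\big[v(j+\tfrac12),u_j\big].$$
   Context: A CPOS $2n$-gon ($n\ge2$) is a closed planar polygon $\mathcal P$ with vertices $P_1,\dots,P_{2n}$ (indices mod $2n$) bounding a convex region, with no two adjacent sides parallel, with $P_{i+n+1}-P_{i+n}$ parallel to $P_{i+1}-P_i$ for all $i$, and positively oriented: $[P_{i+1}-P_i,P_{j+1}-P_j]>0$ for $1\le i<j\le n$, where $[a,b]$ is the determinant of $a,b\in\mathbb R^2$. $M_i=\tfrac12(P_i+P_{i+n})$ (so $M_{n+1}=M_1$). For $1\le i\le n$ set $v(i+\tfrac12)=M_{i+1}-M_i$ and $u_i=P_i-M_i$. *)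

theory Defs
  imports "HOL-Analysis.Analysis"
begin

definition det2 :: "real^2 \<Rightarrow> real^2 \<Rightarrow> real" where
  "det2 a b = a$1 * b$2 - a$2 * b$1"

text \<open>Vertices P_1..P_2n are given by a 2n-periodic function P :: nat => real^2
  (indices taken mod 2n). Edge e_i = P_(i+1) - P_i.\<close>
definition edge :: "(nat \<Rightarrow> real^2) \<Rightarrow> nat \<Rightarrow> real^2" where
  "edge P i = P (Suc i) - P i"

text \<open>CPOS 2n-gon: periodic, convex (every vertex lies in the closed left half-plane of
  every edge line, i.e. the polygon bounds a convex region with positive orientation),
  no two adjacent sides parallel, opposite sides parallel, positively oriented.\<close>
definition CPOS :: "nat \<Rightarrow> (nat \<Rightarrow> real^2) \<Rightarrow> bool" where
  "CPOS n P \<longleftrightarrow> n \<ge> 2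
     \<and> (\<forall>i. P (i + 2*n) = P i)
     \<and> (\<forall>i j. det2 (edge P i) (P j - P i) \<ge> 0)
     \<and> (\<forall>i. det2 (edge P i) (edge P (Suc i)) \<noteq> 0)
     \<and> (\<forall>i. det2 (edge P (i + n)) (edge P i) = 0)
     \<and> (\<forall>i j. 1 \<le> i \<and> i < j \<and> j \<le> n \<longrightarrow> det2 (edge P i) (edge P j) > 0)"

definition midpt :: "nat \<Rightarrow> (nat \<Rightarrow> real^2) \<Rightarrow> nat \<Rightarrow> real^2" where
  "midpt n P i = (1/2) *\<^sub>R (P i + P (i + n))"

text \<open>v(i+1/2) = M_(i+1) - M_i\<close>
definition vhalf :: "nat \<Rightarrow> (nat \<Rightarrow> real^2) \<Rightarrow> nat \<Rightarrow> real^2" where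
  "vhalf n P i = midpt n P (Suc i) - midpt n P i"

definition uvec :: "nat \<Rightarrow> (nat \<Rightarrow> real^2) \<Rightarrow> nat \<Rightarrow> real^2" where
  "uvec n P i = P i - midpt n P i"

end

theory Submission
  imports Defs
begin

text \<open>Each half \<open>P\<^sub>a \<dots> P\<^sub>b\<close> of the polygon is a convex polygonal chain whose edges turn left (on the
  second half because each edge is a negative multiple of the opposite one), so
  its convex hull is the fan of triangles \<open>P\<^sub>a P\<^sub>k P\<^sub>k\<^sub>+\<^sub>1\<close>. Adding up the triangle areas gives the
  shoelace formula \<open>2 A = \<Sum> [P\<^sub>k, P\<^sub>k\<^sub>+\<^sub>1]\<close> for both halves. Expanding \<open>[v(j+\<onehalf>), u\<^sub>j]\<close> in the
  vertices, the terms \<open>[P\<^sub>j, P\<^sub>j\<^sub>+\<^sub>n]\<close> telescope, \<open>[P\<^sub>j\<^sub>+\<^sub>1 - P\<^sub>j, P\<^sub>j\<^sub>+\<^sub>n\<^sub>+\<^sub>1 - P\<^sub>j\<^sub>+\<^sub>n]\<close> vanishes because opposite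
  sides are parallel, and what remains is exactly the difference of the two shoelace sums.\<close>

lemma det2_self [simp]: "det2 x x = 0"
  by (simp add: det2_def)

lemma det2_zero [simp]: "det2 0 x = 0" "det2 x 0 = 0"
  by (simp_all add: det2_def)

lemma det2_eq_0_imp_scaleR:
  fixes x y :: "real^2"
  assumes "det2 x y = 0" "y \<noteq> 0"
  obtains c where "x = c *\<^sub>R y"
proof (cases "y$1 = 0")
  case True
  with assms have "y$2 \<noteq> 0" by (auto simp: vec_eq_iff forall_2)
  with assms True have "x = (x$2 / y$2) *\<^sub>R y"
    by (auto simp: vec_eq_iff forall_2 det2_def field_simps)
  then show ?thesis by (rule that)
next
  case False
  with assms have "x = (x$1 / y$1) *\<^sub>R y"
    by (auto simp: vec_eq_iff forall_2 det2_def field_simps)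
  then show ?thesis by (rule that)
qed

lemma det2_affine_comb:
  assumes "u + v = 1"
  shows "det2 w ((u *\<^sub>R x + v *\<^sub>R y) - p) = u * det2 w (x - p) + v * det2 w (y - p)"
proof -
  have "p = u *\<^sub>R p + v *\<^sub>R p"
    using assms by (simp add: scaleR_left_distrib[symmetric])
  then have comb: "(u *\<^sub>R x + v *\<^sub>R y) - p = u *\<^sub>R (x - p) + v *\<^sub>R (y - p)"
    by (metis (no_types, lifting) add_diff_add scaleR_right_diff_distrib)
  show ?thesis unfolding comb by (simp add: det2_def algebra_simps)
qed

lemma convex_halfplane_det2_ge: "convex {y. det2 w (y - p) \<ge> 0}"
  unfolding convex_def by (auto simp: det2_affine_comb)

lemma convex_halfplane_det2_le: "convex {y. det2 w (y - p) \<le> 0}"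
proof -
  have "{y. det2 w (y - p) \<le> 0} = {y. det2 (-w) (y - p) \<ge> 0}"
    by (auto simp: det2_def)
  then show ?thesis using convex_halfplane_det2_ge by simp
qed

lemma negligible_line_det2:
  assumes "w \<noteq> 0"
  shows "negligible {y. det2 w (y - p) = 0}"
proof -
  define c :: "real^2" where "c = vector [- (w$2), w$1]"
  have "c \<noteq> 0"
    using assms by (auto simp: c_def vec_eq_iff forall_2)
  moreover have "{y. det2 w (y - p) = 0} = {y. c \<bullet> y = c \<bullet> p}"
    by (auto simp: c_def det2_def inner_vec_def sum_2 algebra_simps)
  ultimately show ?thesis using negligible_hyperplane[of c "c \<bullet> p"] by simp
qed

text \<open>The barycentric coordinates of \<open>y\<close> are the three signed areas divided by the total one.\<close>

lemma in_triangle_if_det2: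
  fixes A B C y :: "real^2"
  assumes pos: "det2 (B - A) (C - A) > 0"
    and AB: "det2 (B - A) (y - A) \<ge> 0" and BC: "det2 (C - B) (y - B) \<ge> 0"
    and AC: "det2 (C - A) (y - A) \<le> 0"
  shows "y \<in> convex hull {A, B, C}"
proof -
  define d where "d = det2 (B - A) (C - A)"
  define u where "u = det2 (C - B) (y - B) / d"
  define v where "v = - det2 (C - A) (y - A) / d"
  define w where "w = det2 (B - A) (y - A) / d"
  have "d > 0" using pos d_def by simp
  have "det2 (C - B) (y - B) - det2 (C - A) (y - A) + det2 (B - A) (y - A) = d"
    unfolding d_def det2_def by (simp add: algebra_simps)
  with \<open>d > 0\<close> have "u + v + w = 1"
    unfolding u_def v_def w_def by (simp add: field_simps)
  moreover have "y = u *\<^sub>R A + v *\<^sub>R B + w *\<^sub>R C"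
  proof -
    have coords: "d * u = det2 (C - B) (y - B)" "d * v = - det2 (C - A) (y - A)"
      "d * w = det2 (B - A) (y - A)"
      using \<open>d > 0\<close> unfolding u_def v_def w_def by auto
    have "d *\<^sub>R y = (d * u) *\<^sub>R A + (d * v) *\<^sub>R B + (d * w) *\<^sub>R C"
      unfolding coords unfolding d_def by (simp add: vec_eq_iff forall_2 det2_def algebra_simps)
    then have "d *\<^sub>R y = d *\<^sub>R (u *\<^sub>R A + v *\<^sub>R B + w *\<^sub>R C)"
      by (simp add: scaleR_add_right)
    with \<open>d > 0\<close> show ?thesis by simp
  qed
  moreover have "0 \<le> u" "0 \<le> v" "0 \<le> w"
    using \<open>d > 0\<close> AB BC AC unfolding u_def v_def w_def by (auto simp: divide_nonpos_pos)
  ultimately show ?thesis unfolding convex_hull_3 by blast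
qed

lemma measure_triangle_det2:
  fixes A B C :: "real^2"
  assumes "det2 (B - A) (C - A) > 0"
  shows "measure lebesgue (convex hull {A, B, C}) = det2 (B - A) (C - A) / 2"
proof -
  have "compact (convex hull {A, B, C})"
    by (intro finite_imp_compact_convex_hull) auto
  then have "measure lebesgue (convex hull {A, B, C}) = measure lborel (convex hull {A, B, C})"
    by (intro measure_completion) (auto dest: compact_imp_closed)
  also have "\<dots> = det2 (B - A) (C - A) / 2"
    using assms content_triangle[of A B C] by (simp add: det2_def algebra_simps)
  finally show ?thesis .
qed

subsection \<open>Area of a convex chain\<close>

locale convex_chain =
  fixes P :: "nat \<Rightarrow> real^2" and a b :: nat
  assumes chain_length: "a + 2 \<le> b"
    and left_of_edges:
      "\<And>k j. a \<le> k \<Longrightarrow> k < b \<Longrightarrow> a \<le> j \<Longrightarrow> j \<le> b \<Longrightarrow> det2 (edge P k) (P j - P k) \<ge> 0"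
    and edges_turn_left: "\<And>l i. a \<le> l \<Longrightarrow> l < i \<Longrightarrow> i < b \<Longrightarrow> det2 (edge P l) (edge P i) > 0"
begin

lemma det2_chord_edge_nonneg:
  assumes "a \<le> j" "j \<le> k" "k < b"
  shows "det2 (P j - P a) (edge P k) \<ge> 0"
  using assms(1,2)
proof (induction j rule: dec_induct)
  case (step j)
  have "det2 (P (Suc j) - P a) (edge P k) = det2 (P j - P a) (edge P k) + det2 (edge P j) (edge P k)"
    by (simp add: edge_def det2_def algebra_simps)
  moreover have "det2 (edge P j) (edge P k) > 0"
    using edges_turn_left[of j k] step assms by auto
  ultimately show ?case using step by simp
qed simp

lemma det2_chords_nonpos:
  assumes "a \<le> j" "j \<le> k" "k \<le> b"
  shows "det2 (P k - P a) (P j - P a) \<le> 0"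
  using assms(2,3)
proof (induction k rule: dec_induct)
  case (step k)
  have "det2 (P (Suc k) - P a) (P j - P a) = det2 (P k - P a) (P j - P a) - det2 (P j - P a) (edge P k)"
    by (simp add: edge_def det2_def algebra_simps)
  moreover have "det2 (P j - P a) (edge P k) \<ge> 0"
    using det2_chord_edge_nonneg[of j k] step assms by auto
  ultimately show ?case using step by simp
qed simp

lemma det2_consecutive_chords_pos:
  assumes "a < m" "m < b"
  shows "det2 (P m - P a) (P (Suc m) - P a) > 0"
proof -
  obtain q where q: "m = Suc q" using assms by (cases m) auto
  have "det2 (P m - P a) (P (Suc m) - P a) = det2 (P q - P a) (edge P m) + det2 (edge P q) (edge P m)"
    by (simp add: q edge_def det2_def algebra_simps)
  moreover have "det2 (P q - P a) (edge P m) \<ge> 0"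
    using det2_chord_edge_nonneg[of q m] assms q by auto
  moreover have "det2 (edge P q) (edge P m) > 0"
    using edges_turn_left[of q m] assms q by auto
  ultimately show ?thesis by simp
qed

definition fan_region :: "nat \<Rightarrow> (real^2) set" where
  "fan_region m =
     (\<Inter>k\<in>{a..<m}. {y. det2 (edge P k) (y - P k) \<ge> 0}) \<inter> {y. det2 (P m - P a) (y - P a) \<le> 0}"

lemma hull_subset_fan_region:
  assumes "m \<le> b"
  shows "convex hull (P ` {a..m}) \<subseteq> fan_region m"
proof (rule hull_minimal)
  show "convex (fan_region m)"
    unfolding fan_region_def
    by (intro convex_Int convex_INT convex_halfplane_det2_ge convex_halfplane_det2_le)
  show "P ` {a..m} \<subseteq> fan_region m"
    using left_of_edges det2_chords_nonpos assms by (fastforce simp: fan_region_def)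
qed

lemma fan_region_base: "fan_region (a + 2) \<subseteq> convex hull {P a, P (Suc a), P (Suc (Suc a))}"
proof
  fix y assume "y \<in> fan_region (a + 2)"
  then have "det2 (edge P a) (y - P a) \<ge> 0" "det2 (edge P (Suc a)) (y - P (Suc a)) \<ge> 0"
    "det2 (P (a + 2) - P a) (y - P a) \<le> 0"
    unfolding fan_region_def by auto
  moreover have "det2 (P (Suc a) - P a) (P (Suc (Suc a)) - P a) > 0"
    using det2_consecutive_chords_pos[of "Suc a"] chain_length by auto
  ultimately show "y \<in> convex hull {P a, P (Suc a), P (Suc (Suc a))}"
    by (intro in_triangle_if_det2) (auto simp: edge_def)
qed

lemma fan_region_Suc_subset:
  assumes "a < m" "m < b"
  shows "fan_region (Suc m) \<subseteq> fan_region m \<union> convex hull {P a, P m, P (Suc m)}"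
proof
  fix y assume y: "y \<in> fan_region (Suc m)"
  show "y \<in> fan_region m \<union> convex hull {P a, P m, P (Suc m)}"
  proof (cases "det2 (P m - P a) (y - P a) \<le> 0")
    case True
    with y show ?thesis unfolding fan_region_def by auto
  next
    case False
    moreover have "det2 (edge P m) (y - P m) \<ge> 0" "det2 (P (Suc m) - P a) (y - P a) \<le> 0"
      using y assms unfolding fan_region_def by auto
    ultimately have "y \<in> convex hull {P a, P m, P (Suc m)}"
      using det2_consecutive_chords_pos[OF assms]
      by (intro in_triangle_if_det2) (auto simp: edge_def)
    then show ?thesis by auto
  qed
qed

lemma hull_eq_fan_region:
  assumes "a + 2 \<le> m" "m \<le> b"
  shows "convex hull (P ` {a..m}) = fan_region m"
  using assms
proof (induction m rule: dec_induct)
  case base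
  have "{a..a + 2} = {a, Suc a, Suc (Suc a)}" by auto
  then show ?case
    using hull_subset_fan_region[of "a + 2"] fan_region_base chain_length by auto
next
  case (step m)
  have "fan_region (Suc m) \<subseteq> convex hull (P ` {a..m}) \<union> convex hull {P a, P m, P (Suc m)}"
    using fan_region_Suc_subset[of m] step by auto
  also have "\<dots> \<subseteq> convex hull (P ` {a..Suc m})"
    using step by (intro Un_least hull_mono) auto
  finally show ?case using hull_subset_fan_region[of "Suc m"] step by auto
qed

lemma hull_Suc_eq_Un_triangle:
  assumes "a + 2 \<le> m" "m < b"
  shows "convex hull (P ` {a..Suc m}) = convex hull (P ` {a..m}) \<union> convex hull {P a, P m, P (Suc m)}"
proof -
  have "convex hull (P ` {a..m}) \<union> convex hull {P a, P m, P (Suc m)} \<subseteq> convex hull (P ` {a..Suc m})"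
    using assms by (intro Un_least hull_mono) auto
  then show ?thesis
    using hull_eq_fan_region fan_region_Suc_subset[of m] assms by auto
qed

lemma negligible_hull_Int_triangle:
  assumes "a < m" "m < b"
  shows "negligible (convex hull (P ` {a..m}) \<inter> convex hull {P a, P m, P (Suc m)})"
proof -
  have below: "convex hull (P ` {a..m}) \<subseteq> {y. det2 (P m - P a) (y - P a) \<le> 0}"
    using det2_chords_nonpos assms by (intro hull_minimal convex_halfplane_det2_le) auto
  have above: "convex hull {P a, P m, P (Suc m)} \<subseteq> {y. det2 (P m - P a) (y - P a) \<ge> 0}"
    using det2_consecutive_chords_pos[OF assms]
    by (intro hull_minimal convex_halfplane_det2_ge) auto
  have "P m - P a \<noteq> 0"
    using det2_consecutive_chords_pos[OF assms] by auto
  from negligible_line_det2[OF this, of "P a"] show ?thesis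
    by (rule negligible_subset) (use below above in force)
qed

lemma measure_hull_fan:
  assumes "a + 2 \<le> m" "m \<le> b"
  shows "measure lebesgue (convex hull (P ` {a..m}))
           = (\<Sum>k=a+1..<m. det2 (P k - P a) (P (Suc k) - P a)) / 2"
  using assms
proof (induction m rule: dec_induct)
  case base
  have "{a..a + 2} = {a, Suc a, Suc (Suc a)}" by auto
  then show ?case
    using measure_triangle_det2 det2_consecutive_chords_pos[of "Suc a"] chain_length by simp
next
  case (step m)
  let ?T = "convex hull {P a, P m, P (Suc m)}"
  have "convex hull (P ` {a..m}) \<in> lmeasurable" "?T \<in> lmeasurable"
    by (intro lmeasurable_compact finite_imp_compact_convex_hull; simp)+
  note measure_Un3[OF this]
  moreover have "measure lebesgue (convex hull (P ` {a..m}) \<inter> ?T) = 0"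
    using negligible_hull_Int_triangle step by (intro negligible_imp_measure0) auto
  ultimately have "measure lebesgue (convex hull (P ` {a..Suc m}))
               = measure lebesgue (convex hull (P ` {a..m})) + measure lebesgue ?T"
    using hull_Suc_eq_Un_triangle[of m] measure_Un3 step by simp
  also have "measure lebesgue ?T = det2 (P m - P a) (P (Suc m) - P a) / 2"
    using measure_triangle_det2 det2_consecutive_chords_pos step by simp
  finally show ?case
    using step by (simp add: add_divide_distrib)
qed

lemma measure_hull_shoelace:
  "measure lebesgue (convex hull (P ` {a..b}))
     = ((\<Sum>k=a..<b. det2 (P k) (P (Suc k))) + det2 (P b) (P a)) / 2"
proof -
  have "(\<Sum>k=a+1..<m. det2 (P k - P a) (P (Suc k) - P a))
          = (\<Sum>k=a..<m. det2 (P k) (P (Suc k))) + det2 (P m) (P a)" if "a < m" for m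
    using Suc_leI[OF that]
  proof (induction m rule: dec_induct)
    case (step m)
    then show ?case by (simp add: sum.atLeastLessThan_Suc det2_def algebra_simps)
  qed (simp add: det2_def)
  then show ?thesis
    using measure_hull_fan chain_length by simp
qed

end

subsection \<open>CPOS polygons\<close>

text \<open>The \<open>n\<close> edges after \<open>e\<^sub>i\<close> all turn left from it, so \<open>P\<^sub>i\<^sub>+\<^sub>n\<close> lies strictly left of the line of
  \<open>e\<^sub>i\<close>; convexity at the edge \<open>e\<^sub>i\<^sub>+\<^sub>n\<close> then forces the parallel edge \<open>e\<^sub>i\<^sub>+\<^sub>n\<close> to point backwards.
  The induction on \<open>i\<close> is needed for the edges \<open>e\<^sub>j\<^sub>+\<^sub>n\<close>, \<open>j < i\<close>, among them.\<close>

lemma CPOS_opposite_edge_antiparallel: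
  assumes C: "CPOS n P" and i: "1 \<le> i" "i \<le> n"
  obtains c where "c < 0" "edge P (i + n) = c *\<^sub>R edge P i"
  using i that
proof (induction i arbitrary: thesis rule: less_induct)
  case (less i)
  from C have n2: "n \<ge> 2" and conv: "\<And>i j. det2 (edge P i) (P j - P i) \<ge> 0"
    and nonpar: "\<And>i. det2 (edge P i) (edge P (Suc i)) \<noteq> 0"
    and par: "\<And>i. det2 (edge P (i + n)) (edge P i) = 0"
    and pos: "\<And>i j. 1 \<le> i \<Longrightarrow> i < j \<Longrightarrow> j \<le> n \<Longrightarrow> det2 (edge P i) (edge P j) > 0"
    unfolding CPOS_def by auto
  have nz: "edge P k \<noteq> 0" for k using nonpar[of k] by auto
  obtain c where c: "edge P (i + n) = c *\<^sub>R edge P i"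
    using det2_eq_0_imp_scaleR[OF par[of i] nz[of i]] by blast
  have turn: "det2 (edge P i) (edge P k) > 0" if "i + 1 \<le> k" "k \<le> i + n - 1" for k
  proof (cases "k \<le> n")
    case True
    then show ?thesis using pos[of i k] that less.prems(2) by auto
  next
    case False
    define j where "j = k - n"
    have j: "1 \<le> j" "j < i" "k = j + n" using False that unfolding j_def by auto
    obtain cj where cj: "cj < 0" "edge P (j + n) = cj *\<^sub>R edge P j"
      using less.IH[of j] j less.prems(3) by auto
    have "det2 (edge P i) (edge P k) = (- cj) * det2 (edge P j) (edge P i)"
      using cj(2) j(3) by (simp add: det2_def algebra_simps)
    moreover have "det2 (edge P j) (edge P i) > 0" using pos[of j i] j less.prems(3) by auto
    ultimately show ?thesis using cj(1) by (simp add: mult_neg_pos)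
  qed
  define g where "g k = det2 (edge P i) (P k - P i)" for k
  have g_Suc: "g (Suc k) = g k + det2 (edge P i) (edge P k)" for k
    by (simp add: g_def edge_def det2_def algebra_simps)
  have g_nonneg: "g k \<ge> 0" if "i + 1 \<le> k" "k \<le> i + n - 1" for k
    using that
  proof (induction k rule: dec_induct)
    case base show ?case by (simp add: g_def edge_def)
  next
    case (step k) then show ?case using g_Suc[of k] turn[of k] by auto
  qed
  have "g (i + n) > 0"
  proof -
    have "i + n = Suc (i + n - 1)" using n2 by auto
    then have "g (i + n) = g (i + n - 1) + det2 (edge P i) (edge P (i + n - 1))"
      using g_Suc by metis
    moreover have "g (i + n - 1) \<ge> 0" using g_nonneg n2 by auto
    moreover have "det2 (edge P i) (edge P (i + n - 1)) > 0" using turn n2 by auto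
    ultimately show ?thesis by simp
  qed
  moreover have "(- c) * g (i + n) \<ge> 0"
    using conv[of "i + n" i] c by (simp add: g_def det2_def algebra_simps)
  ultimately have "c \<le> 0"
    by (simp add: mult_le_0_iff)
  moreover have "c \<noteq> 0" using c nz[of "i + n"] by auto
  ultimately have "c < 0" by simp
  then show ?case using c by (rule less.prems(1))
qed

lemma CPOS_second_half_turns_left:
  assumes C: "CPOS n P" and "n + 1 \<le> l" "l < i" "i < 2 * n + 1"
  shows "det2 (edge P l) (edge P i) > 0"
proof -
  define l' i' where "l' = l - n" and "i' = i - n"
  have idx: "l = l' + n" "i = i' + n" "1 \<le> l'" "l' < i'" "i' \<le> n"
    using assms unfolding l'_def i'_def by auto
  obtain cl where cl: "cl < 0" "edge P l = cl *\<^sub>R edge P l'"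
    using CPOS_opposite_edge_antiparallel[OF C, of l'] idx by auto
  obtain ci where ci: "ci < 0" "edge P i = ci *\<^sub>R edge P i'"
    using CPOS_opposite_edge_antiparallel[OF C, of i'] idx by auto
  have "det2 (edge P l') (edge P i') > 0" using C idx unfolding CPOS_def by auto
  moreover have "det2 (edge P l) (edge P i) = (cl * ci) * det2 (edge P l') (edge P i')"
    using cl ci by (simp add: det2_def algebra_simps)
  ultimately show ?thesis using cl ci by (simp add: mult_neg_neg)
qed

lemma det2_vhalf_uvec:
  "4 * det2 (vhalf n P j) (uvec n P j) =
     det2 (P (j + n)) (P (Suc (j + n))) - det2 (P j) (P (Suc j))
     - (det2 (P (Suc j)) (P (Suc j + n)) - det2 (P j) (P (j + n)))
     + det2 (edge P j) (edge P (j + n))"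
  by (simp add: vhalf_def uvec_def midpt_def edge_def det2_def algebra_simps)

lemma sum_det2_vhalf_uvec:
  assumes par: "\<And>j. det2 (edge P (j + n)) (edge P j) = 0"
  shows "4 * (\<Sum>j=1..n. det2 (vhalf n P j) (uvec n P j)) =
     ((\<Sum>k=n+1..<2*n+1. det2 (P k) (P (Suc k))) + det2 (P (2*n+1)) (P (n+1)))
     - ((\<Sum>k=1..<n+1. det2 (P k) (P (Suc k))) + det2 (P (n+1)) (P 1))"
proof -
  have "det2 (edge P j) (edge P (j + n)) = 0" for j
    using par[of j] by (simp add: det2_def algebra_simps)
  then have "4 * (\<Sum>j=1..n. det2 (vhalf n P j) (uvec n P j)) =
     (\<Sum>j=1..<n+1. det2 (P (j + n)) (P (Suc (j + n)))) - (\<Sum>j=1..<n+1. det2 (P j) (P (Suc j)))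
     - (\<Sum>j=1..<n+1. det2 (P (Suc j)) (P (Suc j + n)) - det2 (P j) (P (j + n)))"
    by (simp add: sum_distrib_left det2_vhalf_uvec sum_subtractf atLeastLessThanSuc_atLeastAtMost)
  also have "(\<Sum>j=1..<n+1. det2 (P (j + n)) (P (Suc (j + n))))
               = (\<Sum>k=n+1..<2*n+1. det2 (P k) (P (Suc k)))"
    using sum.shift_bounds_nat_ivl[of "\<lambda>k. det2 (P k) (P (Suc k))" 1 n "n + 1"]
    by (simp add: add.commute mult_2)
  also have "(\<Sum>j=1..<n+1. det2 (P (Suc j)) (P (Suc j + n)) - det2 (P j) (P (j + n)))
               = det2 (P (n+1)) (P (2*n+1)) - det2 (P 1) (P (n+1))"
    using sum_Suc_diff'[of 1 "n + 1" "\<lambda>j. det2 (P j) (P (j + n))"] by (simp add: mult_2)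
  finally show ?thesis by (simp add: det2_def algebra_simps)
qed

theorem mainTheorem8:
  fixes n :: nat and P :: "nat \<Rightarrow> real^2"
  assumes "CPOS n P"
  shows "measure lebesgue (convex hull (P ` {n+1..2*n+1}))
           - measure lebesgue (convex hull (P ` {1..n+1}))
         = 2 * (\<Sum>j=1..n. det2 (vhalf n P j) (uvec n P j))"
proof -
  from assms have "n \<ge> 2" and "P (1 + 2*n) = P 1"
    and left: "\<And>i j. det2 (edge P i) (P j - P i) \<ge> 0"
    and par: "\<And>j. det2 (edge P (j + n)) (edge P j) = 0"
    and "\<And>i j. 1 \<le> i \<Longrightarrow> i < j \<Longrightarrow> j \<le> n \<Longrightarrow> det2 (edge P i) (edge P j) > 0"
    unfolding CPOS_def by blast+
  then interpret first: convex_chain P 1 "n + 1"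
    by unfold_locales auto
  interpret second: convex_chain P "n + 1" "2 * n + 1"
    using \<open>n \<ge> 2\<close> left CPOS_second_half_turns_left[OF assms] by unfold_locales auto
  show ?thesis
    using first.measure_hull_shoelace second.measure_hull_shoelace sum_det2_vhalf_uvec[OF par]
    by (simp add: field_simps)
qed

end
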